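(* Let $q$ be an odd prime power and let $f(X)\in\mathbb{F}_q[X]$ permute $\mathbb{F}_q$. Then there is no $a\in\mathbb{F}_q$ for which $g_a(X):=\frac{f(X+a)-f(a)}{X}$ permutes $\mathbb{F}_q$. *)

theory Defs
  imports "HOL-Computational_Algebra.Polynomial"
begin

definition permutes_field :: "'a::{finite,field} poly \<Rightarrow> bool" where
  "permutes_field p \<longleftrightarrow> bij (poly p)"

end

theory Submission
  imports Defs "HOL-Number_Theory.Residues"
begin

text \<open>By Wilson's theorem the nonzero elements of a finite field multiply to \<open>-1\<close>.
  Put \<open>h(x) = f(x + a) - f(a)\<close> and \<open>g = h / X\<close>, so \<open>h(x) = x g(x)\<close>. If \<open>f\<close> and \<open>g\<close> are
  permutations, so is \<open>h\<close>; both \<open>h\<close> and \<open>g\<close> fix \<open>0\<close>, because the zero of \<open>g\<close> is a zero of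
  the injective \<open>h\<close>. Taking the product of \<open>h(x) = x g(x)\<close> over all \<open>x \<noteq> 0\<close> gives
  \<open>-1 = (-1) (-1) = 1\<close>, which is impossible in odd characteristic.\<close>

lemma prod_involution_eq_1:
  fixes f :: "'a \<Rightarrow> 'b::comm_monoid_mult"
  assumes "finite X"
    and "\<And>x. x \<in> X \<Longrightarrow> f (h x) * f x = 1"
    and "\<And>x. x \<in> X \<Longrightarrow> h x \<in> X" "\<And>x. x \<in> X \<Longrightarrow> h (h x) = x" "\<And>x. x \<in> X \<Longrightarrow> h x \<noteq> x"
  shows "(\<Prod>x\<in>X. f x) = 1"
  using assms
proof (induction "card X" arbitrary: X rule: less_induct)
  case less
  show ?case
  proof (cases "X = {}")
    case False
    then obtain x where x: "x \<in> X" by blast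
    define Y where "Y = X - {x, h x}"
    have card_Y: "card Y < card X"
      unfolding Y_def using less.prems(1) x by (intro psubset_card_mono) auto
    have involution_Y: "h y \<in> Y" "h (h y) = y" "h y \<noteq> y" if "y \<in> Y" for y
      using that x less.prems(3-5) unfolding Y_def by auto metis
    have prod_Y: "(\<Prod>y\<in>Y. f y) = 1"
      using less.prems(1,2) by (intro less.hyps[OF card_Y _ _ involution_Y]) (auto simp: Y_def)
    have X_eq: "X = insert x (insert (h x) Y)"
      unfolding Y_def using x less.prems by auto
    have "finite Y" "x \<notin> Y" "h x \<notin> Y" "h x \<noteq> x"
      unfolding Y_def using x less.prems by auto
    then have "(\<Prod>y\<in>X. f y) = f x * (f (h x) * (\<Prod>y\<in>Y. f y))"
      by (subst X_eq) simp
    then show ?thesis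
      using prod_Y less.prems(2)[OF x] by (simp add: mult.commute)
  qed simp
qed

lemma prod_nonzero_field_eq_minus_one:
  "(\<Prod>x\<in>-{0}. x) = (-1 :: 'a::{finite,field})"
proof -
  define S :: "'a set" where "S = -{0, 1, -1}"
  have inverse_eq_minus_one: "inverse x = -1 \<longleftrightarrow> x = -1" for x :: 'a
    by (metis inverse_1 inverse_inverse_eq inverse_minus_eq)
  have self_inverse: "x = 1 \<or> x = -1" if "inverse x = x" "x \<noteq> 0" for x :: 'a
  proof -
    have "x * x = 1" using that by (metis right_inverse)
    then show ?thesis by (simp add: power2_eq_square [symmetric] power2_eq_1_iff)
  qed
  have prod_S: "(\<Prod>x\<in>S. x) = 1"
  proof (rule prod_involution_eq_1[where h = inverse])
    fix x assume "x \<in> S"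
    then show "inverse x * x = 1" "inverse x \<in> S" "inverse (inverse x) = x" "inverse x \<noteq> x"
      using self_inverse inverse_eq_minus_one by (auto simp: S_def inverse_eq_iff_eq)
  qed simp
  show ?thesis
  proof (cases "(1::'a) = -1")
    case True
    then have "-{0} = insert (1::'a) S" by (auto simp: S_def)
    then show ?thesis using prod_S True by (simp add: S_def)
  next
    case False
    then have "-{0} = insert (1::'a) (insert (-1) S)" by (auto simp: S_def)
    then show ?thesis using prod_S False by (simp add: S_def)
  qed
qed

lemma prod_nonzero_permutation_eq_minus_one:
  fixes p :: "'a::{finite,field} \<Rightarrow> 'a"
  assumes "bij p" and "p 0 = 0"
  shows "(\<Prod>x\<in>-{0}. p x) = -1"
proof -
  have "bij_betw p (-{0}) (-{0})"
    using assms by (simp add: Compl_eq_Diff_UNIV bij_betw_DiffI)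
  then show ?thesis
    using prod.reindex_bij_betw[of p "-{0}" "-{0}" id] prod_nonzero_field_eq_minus_one
    by simp
qed

lemma one_neq_minus_one_if_odd_card:
  assumes "odd (card (UNIV :: 'a::{finite,ring_1} set))"
  shows "(1::'a) \<noteq> -1"
proof
  assume "(1::'a) = -1"
  then have "of_nat 2 = (0::'a)" by (metis add_eq_0_iff2 of_nat_numeral one_add_one)
  then have "CHAR('a) \<le> 2"
    by (simp only: of_nat_eq_0_iff_char_dvd) (rule dvd_imp_le, simp_all)
  moreover have "odd CHAR('a)"
    using CHAR_dvd_CARD[where 'a = 'a] assms dvd_trans by blast
  ultimately show False
    using CHAR_not_1[where 'a = 'a] by presburger
qed

lemma one_eq_minus_one_if_bij_times_id:
  fixes g :: "'a::{finite,field} \<Rightarrow> 'a"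
  assumes g: "bij g" and h: "bij (\<lambda>x. x * g x)"
  shows "(1::'a) = -1"
proof -
  have "g 0 = 0"
  proof -
    obtain z where z: "g z = 0" using g by (metis bij_pointE)
    then have "z * g z = 0 * g 0" by simp
    then have "z = 0" using h by (metis (no_types, lifting) bij_is_inj inj_eq)
    then show ?thesis using z by simp
  qed
  have "(-1::'a) = (\<Prod>x\<in>-{0}. x * g x)"
    using prod_nonzero_permutation_eq_minus_one[OF h] by simp
  also have "\<dots> = (\<Prod>x\<in>-{0}. x) * (\<Prod>x\<in>-{0}. g x)"
    by (rule prod.distrib)
  also have "\<dots> = (-1) * (-1)"
    by (simp only: prod_nonzero_field_eq_minus_one
        prod_nonzero_permutation_eq_minus_one[OF g \<open>g 0 = 0\<close>])
  finally show ?thesis by simp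
qed

lemma poly_eq_times_poly_div_X:
  fixes p :: "'a::field poly"
  assumes "poly p 0 = 0"
  shows "poly p x = x * poly (p div [:0, 1:]) x"
proof -
  have "[:0, 1:] dvd p" using assms dvd_iff_poly_eq_0[of 0 p] by simp
  then have "poly p x = poly ([:0, 1:] * (p div [:0, 1:])) x"
    by (simp only: dvd_mult_div_cancel)
  also have "\<dots> = x * poly (p div [:0, 1:]) x"
    by simp
  finally show ?thesis .
qed

theorem proposition6p1:
  fixes f :: "'a::{finite,field} poly"
  assumes "odd (card (UNIV :: 'a set))"
    and "permutes_field f"
  shows "\<not> (\<exists>a::'a. permutes_field
            ((pcompose f [:a, 1:] - [:poly f a:]) div [:0, 1:]))"
proof
  assume "\<exists>a. permutes_field ((pcompose f [:a, 1:] - [:poly f a:]) div [:0, 1:])"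
  then obtain a where g: "bij (poly ((pcompose f [:a, 1:] - [:poly f a:]) div [:0, 1:]))"
    unfolding permutes_field_def by blast
  define h where "h = pcompose f [:a, 1:] - [:poly f a:]"
  have poly_h: "poly h x = poly f (a + x) - poly f a" for x
    unfolding h_def by (simp add: poly_pcompose)
  have "inj (poly f)"
    using assms(2) unfolding permutes_field_def by (rule bij_is_inj)
  then have "inj (poly h)"
    by (simp add: inj_def poly_h) (metis add_left_cancel)
  then have "bij (poly h)"
    by (simp add: bij_def finite_UNIV_inj_surj)
  moreover have "poly h = (\<lambda>x. x * poly (h div [:0, 1:]) x)"
    by (rule ext, rule poly_eq_times_poly_div_X) (simp add: poly_h)
  ultimately have "bij (\<lambda>x. x * poly (h div [:0, 1:]) x)"
    by simp
  then have "(1::'a) = -1"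
    using one_eq_minus_one_if_bij_times_id g unfolding h_def by blast
  then show False
    using one_neq_minus_one_if_odd_card assms(1) by blast
qed

end
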